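(* Let $m_1,m_2,m_3,m_4>0$, $M=\sum m_i$, and for $\mathbf{r}=(r_{12},r_{13},r_{14},r_{23},r_{24},r_{34})$ let $U(\mathbf{r})=\sum_{i<j}\frac{m_im_j}{r_{ij}}$, $I(\mathbf{r})=\frac{1}{2M}\sum_{i<j}m_im_jr_{ij}^2$, $P(\mathbf{r})=r_{12}r_{34}+r_{14}r_{23}-r_{13}r_{24}$, and $\mathcal{M}^+=\{\mathbf{r}\in[0,\infty)^6: I(\mathbf{r})=1,\ P(\mathbf{r})=0\}$. Then the function $U|_{\mathcal{M}^+}$ has a unique critical point on $\mathcal{M}^+$.
   Context: $U=+\infty$ where some $r_{ij}=0$ (the boundary of $\mathcal{M}^+$); the set of points of $\mathcal{M}^+$ with all $r_{ij}>0$ is a smooth 4-dimensional manifold, and a critical point of $U|_{\mathcal{M}^+}$ is a point there at which the gradient of $U$ is a linear combination of the gradients of $I$ and $P$. *)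

theory Defs
  imports "HOL-Analysis.Analysis" "HOL-Library.Numeral_Type"
begin

text \<open>Configurations of mutual distances: r :: real^6 with
  r$1 = r12, r$2 = r13, r$3 = r14, r$4 = r23, r$5 = r24, r$6 = r34.\<close>

definition Upot :: "real \<Rightarrow> real \<Rightarrow> real \<Rightarrow> real \<Rightarrow> real^6 \<Rightarrow> real" where
  "Upot m1 m2 m3 m4 r =
     m1*m2 / r$1 + m1*m3 / r$2 + m1*m4 / r$3 + m2*m3 / r$4 + m2*m4 / r$5 + m3*m4 / r$6"

definition Imom :: "real \<Rightarrow> real \<Rightarrow> real \<Rightarrow> real \<Rightarrow> real^6 \<Rightarrow> real" where
  "Imom m1 m2 m3 m4 r = (1 / (2 * (m1 + m2 + m3 + m4))) *
     (m1*m2*(r$1)^2 + m1*m3*(r$2)^2 + m1*m4*(r$3)^2 + m2*m3*(r$4)^2 + m2*m4*(r$5)^2 + m3*m4*(r$6)^2)"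

definition Pcay :: "real^6 \<Rightarrow> real" where
  "Pcay r = r$1 * r$6 + r$3 * r$4 - r$2 * r$5"

definition Mplus :: "real \<Rightarrow> real \<Rightarrow> real \<Rightarrow> real \<Rightarrow> (real^6) set" where
  "Mplus m1 m2 m3 m4 = {r. (\<forall>i. 0 \<le> r$i) \<and> Imom m1 m2 m3 m4 r = 1 \<and> Pcay r = 0}"

definition crit_point :: "real \<Rightarrow> real \<Rightarrow> real \<Rightarrow> real \<Rightarrow> real^6 \<Rightarrow> bool" where
  "crit_point m1 m2 m3 m4 r \<longleftrightarrow>
     r \<in> Mplus m1 m2 m3 m4 \<and> (\<forall>i. 0 < r$i) \<and>
     (\<exists>DU DI DP a b.
        (Upot m1 m2 m3 m4 has_derivative DU) (at r) \<and>
        (Imom m1 m2 m3 m4 has_derivative DI) (at r) \<and>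
        (Pcay has_derivative DP) (at r) \<and>
        (\<forall>h. DU h = a * DI h + b * DP h))"

end

theory Submission
  imports Defs
begin

text \<open>
  At a critical point r the Lagrange equations -m_ij / r_ij^2 = a m_ij r_ij + b dP/dr_ij force
  both multipliers to be non-positive: a < 0 by Euler's identity for the homogeneous U, I, P,
  and b \<le> 0 because b > 0 would give r_13 r_24 < r_12 r_34, contradicting P(r) = 0.
  Writing any other positive point of M+ as s_ij = r_ij exp t_ij, the potential is strictly
  convex in t, the constraint I(s) = I(r) gives \<Sum> m_ij r_ij^2 t_ij \<le> 0, and P(s) = 0 gives
  \<Sum> r_ij (dP/dr_ij) t_ij \<le> 0 by concavity of ln. With the signs of a and b this makes r the
  strict minimum of U on the positive part of M+, so two critical points cannot coexist.

  For existence, U + M I is coercive on the positive part of {P = 0} and attains a minimum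
  there. Solving P = 0 for r_24 turns it into an unconstrained minimum, whose vanishing gradient
  is a Lagrange equation; since U, I, P are homogeneous of degrees -1, 2, 2, rescaling moves
  this point onto I = 1.
\<close>

lemma exhaust_6: "x = 1 \<or> x = 2 \<or> x = 3 \<or> x = 4 \<or> x = 5 \<or> x = 6" for x :: 6
proof (induct x)
  case (of_int z)
  then have "z = 0 \<or> z = 1 \<or> z = 2 \<or> z = 3 \<or> z = 4 \<or> z = 5" by fastforce
  then show ?case by auto
qed

lemma UNIV_6: "(UNIV :: 6 set) = {1, 2, 3, 4, 5, 6}"
  using exhaust_6 by blast

lemma sum_6: "(\<Sum>i\<in>UNIV. f i) = f 1 + f 2 + f 3 + f 4 + f 5 + f 6"
  for f :: "6 \<Rightarrow> 'a::comm_monoid_add"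
  unfolding UNIV_6 by (simp add: ac_simps)

lemma has_derivative_vec_nth [derivative_intros]:
  "((\<lambda>x. x $ i) has_derivative (\<lambda>h. h $ i)) F"
  by (rule bounded_linear_imp_has_derivative[OF bounded_linear_vec_nth])

lemma eventually_at_positive:
  fixes z :: "real^'n"
  assumes "\<forall>i. 0 < z$i"
  shows "\<forall>\<^sub>F x in at z. \<forall>i. 0 < x$i"
proof (rule eventually_all_finite)
  show "\<forall>\<^sub>F x in at z. 0 < x$i" for i
    using assms by (intro order_tendstoD(1)[OF tendsto_vec_nth[OF tendsto_ident_at]]) auto
qed

lemma ln_less_minus_one: "0 < x \<Longrightarrow> x \<noteq> 1 \<Longrightarrow> ln x < x - 1"
  for x :: real
  using ln_le_minus_one ln_eq_minus_one by fastforce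

lemma ln_weighted_mean_ge:
  fixes p q u v :: real
  assumes "0 < p" "0 < q" "0 < u" "0 < v"
  shows "p * ln u + q * ln v \<le> (p + q) * ln ((p * u + q * v) / (p + q))"
proof -
  have t: "1 - q / (p + q) = p / (p + q)"
    using assms by (simp add: field_simps)
  have "p / (p + q) * ln u + q / (p + q) * ln v \<le> ln (p / (p + q) * u + q / (p + q) * v)"
    using concave_onD[OF ln_concave, of "q / (p + q)" u v] assms by (simp add: t)
  also have "p / (p + q) * u + q / (p + q) * v = (p * u + q * v) / (p + q)"
    by (simp add: add_divide_distrib)
  finally have "(p * ln u + q * ln v) / (p + q) \<le> ln ((p * u + q * v) / (p + q))"
    by (simp add: add_divide_distrib)
  then show ?thesis
    using assms by (simp add: pos_divide_le_eq mult.commute)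
qed

lemma inverse_ge_log_tangent:
  fixes w r s :: real
  assumes "0 < w" "0 < r" "0 < s"
  shows "w / r - w / r * ln (s / r) \<le> w / s"
    and "s \<noteq> r \<Longrightarrow> w / r - w / r * ln (s / r) < w / s"
proof -
  have tangent: "w / r - w / r * ln (s / r) = w / r * (1 + ln (r / s))"
    using assms by (simp add: ln_div algebra_simps)
  have chord: "w / s = w / r * (r / s)"
    using assms by simp
  have "0 < w / r"
    using assms by simp
  then show "w / r - w / r * ln (s / r) \<le> w / s"
    unfolding tangent chord using ln_le_minus_one[of "r / s"] assms
    by (intro mult_left_mono) auto
  assume "s \<noteq> r"
  then show "w / r - w / r * ln (s / r) < w / s"
    unfolding tangent chord using \<open>0 < w / r\<close> ln_less_minus_one[of "r / s"] assms
    by (intro mult_strict_left_mono) auto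
qed

lemma inverse_plus_square_bounds:
  fixes w x C :: real
  assumes "0 < w" "0 < x" "w * (1 / x + x^2 / 2) \<le> C"
  shows "w / C \<le> x" and "x \<le> 1 + 2 * C / w"
proof -
  have split: "w * (1 / x + x^2 / 2) = w / x + w * x^2 / 2"
    by (simp add: distrib_left)
  have "0 < w / x" "0 \<le> w * x^2 / 2"
    using assms by simp_all
  then have inv: "w / x \<le> C" and sq: "w * x^2 / 2 \<le> C"
    using assms(3) unfolding split by linarith+
  with \<open>0 < w / x\<close> have "0 < C"
    by linarith
  then show "w / C \<le> x"
    using inv assms by (simp add: field_simps)
  show "x \<le> 1 + 2 * C / w"
  proof (cases "x \<le> 1")
    case True
    moreover have "0 < 2 * C / w"
      using \<open>0 < C\<close> assms by simp
    ultimately show ?thesis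
      by linarith
  next
    case False
    then have "x \<le> x^2"
      by (simp add: power2_eq_square)
    also have "x^2 \<le> 2 * C / w"
      using sq assms by (simp add: field_simps)
    finally show ?thesis by simp
  qed
qed

definition potential :: "('n \<Rightarrow> real) \<Rightarrow> real^'n \<Rightarrow> real" where
  "potential w r = (\<Sum>i\<in>UNIV. w i / r$i)"

definition moment :: "('n \<Rightarrow> real) \<Rightarrow> real^'n \<Rightarrow> real" where
  "moment w r = (\<Sum>i\<in>UNIV. w i * (r$i)^2)"

definition potential_grad :: "('n \<Rightarrow> real) \<Rightarrow> real^'n \<Rightarrow> real^'n" where
  "potential_grad w r = (\<chi> i. - w i / (r$i)^2)"

definition moment_grad :: "('n \<Rightarrow> real) \<Rightarrow> real^'n \<Rightarrow> real^'n" where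
  "moment_grad w r = (\<chi> i. 2 * w i * r$i)"

lemma has_derivative_potential:
  assumes "\<forall>i. r$i \<noteq> 0"
  shows "(potential w has_derivative (\<lambda>h. potential_grad w r \<bullet> h)) (at r)"
  unfolding potential_def[abs_def] potential_grad_def inner_vec_def
  by (rule derivative_eq_intros refl | simp add: assms)+
     (simp add: fun_eq_iff power2_eq_square)

lemma has_derivative_moment:
  "(moment w has_derivative (\<lambda>h. moment_grad w r \<bullet> h)) (at r)"
  unfolding moment_def[abs_def] moment_grad_def inner_vec_def
  by (rule derivative_eq_intros refl | simp)+ (simp add: fun_eq_iff ac_simps)

lemma inner_potential_grad_self:
  assumes "\<forall>i. r$i \<noteq> 0"
  shows "r \<bullet> potential_grad w r = - potential w r"
  unfolding potential_def potential_grad_def inner_vec_def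
  by (simp add: assms power2_eq_square flip: sum_negf)

lemma inner_moment_grad_self: "r \<bullet> moment_grad w r = 2 * moment w r"
  unfolding moment_def moment_grad_def inner_vec_def
  by (simp add: sum_distrib_left power2_eq_square ac_simps)

lemma moment_scaleR: "moment w (k *\<^sub>R r) = k^2 * moment w r"
  by (simp add: moment_def sum_distrib_left power_mult_distrib ac_simps)

lemma potential_gt_log_tangent:
  fixes w :: "'n::finite \<Rightarrow> real"
  assumes "\<forall>i. 0 < w i" "\<forall>i. 0 < r$i" "\<forall>i. 0 < s$i" "s \<noteq> r"
  shows "potential w r - (\<Sum>i\<in>UNIV. w i / r$i * ln (s$i / r$i)) < potential w s"
proof -
  obtain j where j: "s$j \<noteq> r$j"
    using assms(4) by (auto simp: vec_eq_iff)
  have "w i / r$i - w i / r$i * ln (s$i / r$i) \<le> w i / s$i" for i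
    using assms by (intro inverse_ge_log_tangent(1)) auto
  moreover have "w j / r$j - w j / r$j * ln (s$j / r$j) < w j / s$j"
    using assms j by (intro inverse_ge_log_tangent(2)) auto
  ultimately have "(\<Sum>i\<in>UNIV. w i / r$i - w i / r$i * ln (s$i / r$i)) < (\<Sum>i\<in>UNIV. w i / s$i)"
    by (intro sum_strict_mono_ex1) auto
  then show ?thesis
    by (simp add: potential_def sum_subtractf)
qed

lemma moment_log_nonpos:
  fixes w :: "'n::finite \<Rightarrow> real"
  assumes "\<forall>i. 0 < w i" "\<forall>i. 0 < r$i" "\<forall>i. 0 < s$i" "moment w s = moment w r"
  shows "(\<Sum>i\<in>UNIV. w i * (r$i)^2 * ln (s$i / r$i)) \<le> 0"
proof -
  have "2 * (w i * (r$i)^2 * ln (s$i / r$i)) \<le> w i * (s$i)^2 - w i * (r$i)^2" for i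
  proof -
    have r: "0 < r$i" and s: "0 < s$i" and w: "0 < w i"
      using assms by auto
    have "2 * ln (s$i / r$i) = ln ((s$i / r$i)^2)"
      using r s by (simp add: ln_realpow)
    also have "\<dots> \<le> (s$i / r$i)^2 - 1"
      using r s by (intro ln_le_minus_one) simp
    finally have "(r$i)^2 * (2 * ln (s$i / r$i)) \<le> (r$i)^2 * ((s$i / r$i)^2 - 1)"
      by (simp add: mult_left_mono)
    also have "\<dots> = (s$i)^2 - (r$i)^2"
      using r by (simp add: power_divide right_diff_distrib)
    finally show ?thesis
      using w by (simp add: mult_left_mono ac_simps flip: right_diff_distrib)
  qed
  then have "2 * (\<Sum>i\<in>UNIV. w i * (r$i)^2 * ln (s$i / r$i)) \<le> moment w s - moment w r"
    unfolding moment_def sum_distrib_left sum_subtractf[symmetric] by (rule sum_mono)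
  then show ?thesis
    using assms(4) by simp
qed

section \<open>The cone \<open>P = 0\<close>\<close>

definition cayley_grad :: "real^6 \<Rightarrow> real^6" where
  "cayley_grad r = (\<chi> i. if i = 1 then r$6 else if i = 2 then - r$5 else if i = 3 then r$4
     else if i = 4 then r$3 else if i = 5 then - r$2 else r$1)"

lemma cayley_grad_nth [simp]:
  "cayley_grad r $ 1 = r$6" "cayley_grad r $ 2 = - r$5" "cayley_grad r $ 3 = r$4"
  "cayley_grad r $ 4 = r$3" "cayley_grad r $ 5 = - r$2" "cayley_grad r $ 6 = r$1"
  by (simp_all add: cayley_grad_def)

lemma has_derivative_Pcay:
  "(Pcay has_derivative (\<lambda>h. cayley_grad r \<bullet> h)) (at r)"
  unfolding Pcay_def[abs_def] inner_vec_def sum_6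
  by (rule derivative_eq_intros refl | simp)+ (simp add: fun_eq_iff algebra_simps)

lemma inner_cayley_grad_self: "r \<bullet> cayley_grad r = 2 * Pcay r"
  unfolding Pcay_def inner_vec_def sum_6 by (simp add: algebra_simps)

lemma cayley_grad_scaleR: "cayley_grad (k *\<^sub>R r) = k *\<^sub>R cayley_grad r"
  by (simp add: cayley_grad_def vec_eq_iff)

lemma Pcay_scaleR: "Pcay (k *\<^sub>R r) = k^2 * Pcay r"
  by (simp add: Pcay_def power2_eq_square algebra_simps)

lemma closed_Pcay_zero: "closed {r. Pcay r = 0}"
proof -
  have "continuous_on UNIV Pcay"
    by (meson continuous_at_imp_continuous_on has_derivative_continuous has_derivative_Pcay)
  then show ?thesis
    by (intro closed_Collect_eq continuous_on_const)
qed

definition cayley_cone :: "(real^6) set" where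
  "cayley_cone = {r. (\<forall>i. 0 < r$i) \<and> Pcay r = 0}"

text \<open>Concavity of ln applied to s_13 s_24 = s_12 s_34 + s_14 s_23, with the weights r_12 r_34
  and r_14 r_23 summing to r_13 r_24.\<close>

lemma cayley_log_sum_nonpos:
  assumes "r \<in> cayley_cone" "s \<in> cayley_cone"
  shows "(\<Sum>i\<in>UNIV. r$i * cayley_grad r $ i * ln (s$i / r$i)) \<le> 0"
proof -
  have r: "\<forall>i. 0 < r$i" "r$2 * r$5 = r$1 * r$6 + r$3 * r$4"
    and s: "\<forall>i. 0 < s$i" "s$2 * s$5 = s$1 * s$6 + s$3 * s$4"
    using assms by (auto simp: cayley_cone_def Pcay_def)
  define p q where "p = r$1 * r$6" and "q = r$3 * r$4"
  define u v z where "u = (s$1 * s$6) / p" and "v = (s$3 * s$4) / q"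
    and "z = (s$2 * s$5) / (r$2 * r$5)"
  have pos: "0 < p" "0 < q" "0 < u" "0 < v"
    using r(1) s(1) by (simp_all add: p_def q_def u_def v_def)
  have ln_pair: "ln (s$i / r$i) + ln (s$j / r$j) = ln ((s$i * s$j) / (r$i * r$j))" for i j
  proof -
    have "r$i \<noteq> 0" "r$j \<noteq> 0" "s$i \<noteq> 0" "s$j \<noteq> 0"
      using r(1) s(1) by (metis less_irrefl)+
    then show ?thesis
      by (simp add: ln_mult ln_div)
  qed
  have "(\<Sum>i\<in>UNIV. r$i * cayley_grad r $ i * ln (s$i / r$i))
      = r$1 * r$6 * (ln (s$1 / r$1) + ln (s$6 / r$6))
        + r$3 * r$4 * (ln (s$3 / r$3) + ln (s$4 / r$4))
        - r$2 * r$5 * (ln (s$2 / r$2) + ln (s$5 / r$5))"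
    by (simp add: sum_6 algebra_simps)
  also have "\<dots> = p * ln u + q * ln v - (p + q) * ln z"
    by (simp only: ln_pair p_def q_def u_def v_def z_def r(2))
  finally have sum_eq: "(\<Sum>i\<in>UNIV. r$i * cayley_grad r $ i * ln (s$i / r$i))
      = p * ln u + q * ln v - (p + q) * ln z" .
  have "p * u = s$1 * s$6" "q * v = s$3 * s$4"
    using pos(1,2) by (simp_all add: u_def v_def)
  then have "z = (p * u + q * v) / (p + q)"
    by (simp add: z_def r(2) s(2) p_def q_def)
  then show ?thesis
    unfolding sum_eq using ln_weighted_mean_ge[OF pos] by simp
qed

text \<open>Moves x onto the cone by changing only x$5 = r_24; near a point of the cone this
  parametrizes the cone by the other five distances.\<close>

definition cayley_lift :: "real^6 \<Rightarrow> real^6" where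
  "cayley_lift x = x + ((x$1 * x$6 + x$3 * x$4) / x$2 - x$5) *\<^sub>R axis 5 1"

lemma cayley_lift_nth:
  "cayley_lift x $ i = (if i = 5 then (x$1 * x$6 + x$3 * x$4) / x$2 else x$i)"
  by (simp add: cayley_lift_def axis_def)

lemma cayley_lift_in_cone:
  assumes "\<forall>i. 0 < x$i"
  shows "cayley_lift x \<in> cayley_cone"
proof -
  have "0 < x$1" "0 < x$2" "0 < x$3" "0 < x$4" "0 < x$6"
    using assms by auto
  then have "0 < (x$1 * x$6 + x$3 * x$4) / x$2"
    by (intro divide_pos_pos add_pos_pos mult_pos_pos)
  then show ?thesis
    using assms \<open>0 < x$2\<close> by (auto simp: cayley_cone_def Pcay_def cayley_lift_nth)
qed

lemma cayley_lift_cone: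
  assumes "z \<in> cayley_cone"
  shows "cayley_lift z = z"
proof -
  have "z$2 \<noteq> 0" "z$1 * z$6 + z$3 * z$4 = z$2 * z$5"
    using assms by (auto simp: cayley_cone_def Pcay_def dest: less_imp_neq[symmetric])
  then show ?thesis
    by (simp add: cayley_lift_def)
qed

lemma has_derivative_cayley_lift:
  assumes "z \<in> cayley_cone"
  shows "(cayley_lift has_derivative (\<lambda>h. h + ((cayley_grad z \<bullet> h) / z$2) *\<^sub>R axis 5 1)) (at z)"
proof -
  have nz: "\<forall>i. z$i \<noteq> 0" and P: "z$2 * z$5 = z$1 * z$6 + z$3 * z$4"
    using assms by (auto simp: cayley_cone_def Pcay_def dest: less_imp_neq[symmetric])
  have "((\<lambda>x. (x$1 * x$6 + x$3 * x$4) / x$2 - x$5) has_derivative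
      (\<lambda>h. (cayley_grad z \<bullet> h) / z$2)) (at z)"
    by (rule derivative_eq_intros refl | simp add: nz)+
       (use P nz in \<open>simp add: fun_eq_iff inner_vec_def sum_6 field_simps power2_eq_square\<close>)
  then show ?thesis
    unfolding cayley_lift_def[abs_def] by (intro derivative_intros)
qed

section \<open>Lagrange points are strict minima\<close>

definition lagrange_critical :: "(6 \<Rightarrow> real) \<Rightarrow> real^6 \<Rightarrow> bool" where
  "lagrange_critical w r \<longleftrightarrow>
     (\<exists>a b. potential_grad w r = a *\<^sub>R moment_grad w r + b *\<^sub>R cayley_grad r)"

lemma lagrange_grad_nth:
  assumes "potential_grad w r = a *\<^sub>R moment_grad w r + b *\<^sub>R cayley_grad r" "0 < w i" "0 < r$i"
  shows "w i / r$i = - 2 * a * (w i * (r$i)^2) - b * (r$i * cayley_grad r $ i)"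
    and "- 2 * a * (r$i)^3 - 1 = b * cayley_grad r $ i * (r$i)^2 / w i"
proof -
  have eq: "- w i / (r$i)^2 = a * (2 * w i * r$i) + b * cayley_grad r $ i"
    using assms(1) by (auto simp: vec_eq_iff potential_grad_def moment_grad_def)
  then show "w i / r$i = - 2 * a * (w i * (r$i)^2) - b * (r$i * cayley_grad r $ i)"
    using assms(3) by (simp add: field_simps power2_eq_square)
  show "- 2 * a * (r$i)^3 - 1 = b * cayley_grad r $ i * (r$i)^2 / w i"
    using eq assms(2,3) by (simp add: field_simps power2_eq_square power3_eq_cube)
qed

lemma lagrange_multiplier_moment_neg:
  assumes w: "\<forall>i. 0 < w i" and r: "r \<in> cayley_cone"
    and grad: "potential_grad w r = a *\<^sub>R moment_grad w r + b *\<^sub>R cayley_grad r"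
  shows "a < 0"
proof -
  have pos: "\<forall>i. 0 < r$i" and "Pcay r = 0"
    using r by (auto simp: cayley_cone_def)
  then have "\<forall>i. r$i \<noteq> 0"
    by (metis less_irrefl)
  have "0 < w i / r$i" "0 < w i * (r$i)^2" for i
    using w[rule_format, of i] pos[rule_format, of i] by simp_all
  then have "0 < potential w r" "0 < moment w r"
    by (simp_all add: potential_def moment_def sum_pos)
  have "- potential w r = 2 * a * moment w r + 2 * b * Pcay r"
    using arg_cong[OF grad, of "inner r"]
    by (simp add: inner_potential_grad_self[OF \<open>\<forall>i. r$i \<noteq> 0\<close>] inner_moment_grad_self
        inner_cayley_grad_self inner_add_right)
  with \<open>Pcay r = 0\<close> \<open>0 < potential w r\<close> have "a * moment w r < 0"
    by simp
  with \<open>0 < moment w r\<close> show "a < 0"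
    by (simp add: mult_less_0_iff)
qed

lemma lagrange_multiplier_cayley_nonpos:
  assumes w: "\<forall>i. 0 < w i" and r: "r \<in> cayley_cone"
    and grad: "potential_grad w r = a *\<^sub>R moment_grad w r + b *\<^sub>R cayley_grad r"
  shows "b \<le> 0"
proof (rule ccontr)
  \<comment> \<open>b > 0 makes c r_12^3, c r_34^3 > 1 > c r_13^3, c r_24^3, so r_13 r_24 < r_12 r_34.\<close>
  assume "\<not> b \<le> 0"
  then have "0 < b" by simp
  have pos: "\<forall>i. 0 < r$i" and P: "r$2 * r$5 = r$1 * r$6 + r$3 * r$4"
    using r by (auto simp: cayley_cone_def Pcay_def)
  define c where "c = - 2 * a"
  have "0 < c"
    using lagrange_multiplier_moment_neg[OF w r grad] by (simp add: c_def)
  have cube: "c * (r$i)^3 - 1 = b * cayley_grad r $ i * (r$i)^2 / w i" for i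
    unfolding c_def using lagrange_grad_nth(2)[OF grad] w pos by auto
  have rp: "0 < r$1" "0 < r$2" "0 < r$5" "0 < r$6"
    using pos by auto
  have "0 < b * cayley_grad r $ 1 * (r$1)^2 / w 1" "0 < b * cayley_grad r $ 6 * (r$6)^2 / w 6"
    using \<open>0 < b\<close> rp w by simp_all
  then have big: "1 < c * (r$1)^3" "1 < c * (r$6)^3"
    unfolding cube[symmetric] by simp_all
  have "b * cayley_grad r $ 2 * (r$2)^2 / w 2 < 0" "b * cayley_grad r $ 5 * (r$5)^2 / w 5 < 0"
    using \<open>0 < b\<close> rp w by (simp_all add: mult_pos_neg divide_neg_pos)
  then have small: "c * (r$2)^3 < 1" "c * (r$5)^3 < 1"
    unfolding cube[symmetric] by simp_all
  have "c^2 * (r$2 * r$5)^3 = (c * (r$2)^3) * (c * (r$5)^3)"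
    by (simp add: power_mult_distrib power2_eq_square)
  also have "\<dots> < 1"
    using mult_strict_mono[OF small] \<open>0 < c\<close> rp by simp
  also have "1 < (c * (r$1)^3) * (c * (r$6)^3)"
    using less_1_mult[OF big] .
  also have "\<dots> = c^2 * (r$1 * r$6)^3"
    by (simp add: power_mult_distrib power2_eq_square)
  finally have "(r$2 * r$5)^3 < (r$1 * r$6)^3"
    using \<open>0 < c\<close> by simp
  then have "r$2 * r$5 < r$1 * r$6"
    by (rule power_less_imp_less_base) (use rp in simp)
  moreover have "0 < r$3 * r$4"
    using pos by simp
  ultimately show False
    using P by linarith
qed

lemma lagrange_critical_strict_min:
  assumes w: "\<forall>i. 0 < w i" and r: "r \<in> cayley_cone" and s: "s \<in> cayley_cone"
    and moment: "moment w s = moment w r" and crit: "lagrange_critical w r" and "s \<noteq> r"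
  shows "potential w r < potential w s"
proof -
  obtain a b where grad: "potential_grad w r = a *\<^sub>R moment_grad w r + b *\<^sub>R cayley_grad r"
    using crit by (auto simp: lagrange_critical_def)
  have rpos: "\<forall>i. 0 < r$i" and spos: "\<forall>i. 0 < s$i"
    using r s by (auto simp: cayley_cone_def)
  have term_eq: "w i / r$i * ln (s$i / r$i)
      = - 2 * a * (w i * (r$i)^2 * ln (s$i / r$i))
        - b * (r$i * cayley_grad r $ i * ln (s$i / r$i))" for i
  proof -
    have "w i / r$i = - 2 * a * (w i * (r$i)^2) - b * (r$i * cayley_grad r $ i)"
      using w rpos by (intro lagrange_grad_nth(1)[OF grad]) auto
    then show ?thesis
      by (simp only:) (simp add: algebra_simps)
  qed
  have "(\<Sum>i\<in>UNIV. w i / r$i * ln (s$i / r$i))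
      = - 2 * a * (\<Sum>i\<in>UNIV. w i * (r$i)^2 * ln (s$i / r$i))
        - b * (\<Sum>i\<in>UNIV. r$i * cayley_grad r $ i * ln (s$i / r$i))"
    unfolding term_eq by (simp add: sum_subtractf sum_distrib_left)
  also have "\<dots> \<le> 0"
  proof -
    have "a < 0" "b \<le> 0"
      using lagrange_multiplier_moment_neg[OF w r grad] lagrange_multiplier_cayley_nonpos[OF w r grad]
      by auto
    then have "- 2 * a * (\<Sum>i\<in>UNIV. w i * (r$i)^2 * ln (s$i / r$i)) \<le> 0"
      and "0 \<le> b * (\<Sum>i\<in>UNIV. r$i * cayley_grad r $ i * ln (s$i / r$i))"
      using moment_log_nonpos[OF w rpos spos moment] cayley_log_sum_nonpos[OF r s]
      by (auto intro: mult_nonneg_nonpos mult_nonpos_nonpos)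
    then show ?thesis
      by linarith
  qed
  finally show ?thesis
    using potential_gt_log_tangent[OF w rpos spos \<open>s \<noteq> r\<close>] by linarith
qed

lemma lagrange_critical_scaleR:
  assumes "0 < k" "\<forall>i. r$i \<noteq> 0" "lagrange_critical w r"
  shows "lagrange_critical w (k *\<^sub>R r)"
proof -
  obtain a b where grad: "potential_grad w r = a *\<^sub>R moment_grad w r + b *\<^sub>R cayley_grad r"
    using assms(3) by (auto simp: lagrange_critical_def)
  have "potential_grad w (k *\<^sub>R r)
      = (a / k^3) *\<^sub>R moment_grad w (k *\<^sub>R r) + (b / k^3) *\<^sub>R cayley_grad (k *\<^sub>R r)"
  unfolding vec_eq_iff
  proof
    fix i
    have "- w i / (r$i)^2 = a * (2 * w i * r$i) + b * cayley_grad r $ i"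
      using grad by (auto simp: vec_eq_iff potential_grad_def moment_grad_def)
    then show "potential_grad w (k *\<^sub>R r) $ i
        = ((a / k^3) *\<^sub>R moment_grad w (k *\<^sub>R r) + (b / k^3) *\<^sub>R cayley_grad (k *\<^sub>R r)) $ i"
      using assms(1,2) by (simp add: potential_grad_def moment_grad_def cayley_grad_scaleR
          field_simps power2_eq_square power3_eq_cube)
  qed
  then show ?thesis
    by (auto simp: lagrange_critical_def)
qed

section \<open>Existence of a Lagrange point\<close>

text \<open>For the pair masses as weights this is U + M I.\<close>

definition augmented_potential :: "('n \<Rightarrow> real) \<Rightarrow> real^'n \<Rightarrow> real" where
  "augmented_potential w r = potential w r + moment w r / 2"

lemma has_derivative_augmented_potential:
  assumes "\<forall>i. r$i \<noteq> 0"
  shows "(augmented_potential w has_derivative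
           (\<lambda>h. (potential_grad w r + (1 / 2) *\<^sub>R moment_grad w r) \<bullet> h)) (at r)"
  unfolding augmented_potential_def[abs_def]
  by (rule derivative_eq_intros has_derivative_potential[OF assms] has_derivative_moment | simp)+
     (simp add: fun_eq_iff inner_add_left)

lemma augmented_potential_term_le:
  assumes "\<forall>i. 0 < w i" "\<forall>i. 0 < r$i"
  shows "w i * (1 / r$i + (r$i)^2 / 2) \<le> augmented_potential w r"
proof -
  have "augmented_potential w r = (\<Sum>j\<in>UNIV. w j * (1 / r$j + (r$j)^2 / 2))"
    by (simp add: augmented_potential_def potential_def moment_def sum.distrib
        sum_divide_distrib distrib_left)
  also have "w i * (1 / r$i + (r$i)^2 / 2) \<le> \<dots>"
  proof (rule member_le_sum)
    show "0 \<le> w j * (1 / r$j + (r$j)^2 / 2)" for j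
      using assms[rule_format, of j] by simp
  qed auto
  finally show ?thesis .
qed

lemma augmented_potential_pos:
  assumes w: "\<forall>i. 0 < w i" and r: "r \<in> cayley_cone"
  shows "0 < augmented_potential w r"
proof -
  have "\<forall>i. 0 < r$i"
    using r by (simp add: cayley_cone_def)
  then have "0 < w 1 * (1 / r$1 + (r$1)^2 / 2)"
    using w by (simp add: add_pos_nonneg)
  also have "\<dots> \<le> augmented_potential w r"
    using augmented_potential_term_le[OF w \<open>\<forall>i. 0 < r$i\<close>] .
  finally show ?thesis .
qed

lemma augmented_potential_sublevel_bounded:
  assumes w: "\<forall>i. 0 < w i" and r: "r \<in> cayley_cone" and "augmented_potential w r \<le> C"
  shows "r \<in> cbox (\<chi> i. w i / C) (\<chi> i. 1 + 2 * C / w i)"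
proof -
  have pos: "\<forall>i. 0 < r$i"
    using r by (simp add: cayley_cone_def)
  have "w i / C \<le> r$i \<and> r$i \<le> 1 + 2 * C / w i" for i
  proof -
    have "w i * (1 / r$i + (r$i)^2 / 2) \<le> C"
      using augmented_potential_term_le[OF w pos, of i] assms(3) by linarith
    then show ?thesis
      using inverse_plus_square_bounds w pos by blast
  qed
  then show ?thesis
    by (simp add: mem_box_cart)
qed

lemma continuous_on_augmented_potential: "continuous_on cayley_cone (augmented_potential w)"
proof (intro continuous_at_imp_continuous_on ballI)
  fix r assume "r \<in> cayley_cone"
  then have "\<forall>i. r$i \<noteq> 0"
    by (auto simp: cayley_cone_def dest: less_imp_neq[symmetric])
  then show "isCont (augmented_potential w) r"
    by (rule has_derivative_continuous[OF has_derivative_augmented_potential])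
qed

lemma ex_min_augmented_potential:
  assumes w: "\<forall>i. 0 < w i"
  shows "\<exists>z\<in>cayley_cone. \<forall>r\<in>cayley_cone. augmented_potential w z \<le> augmented_potential w r"
proof -
  define p :: "real^6" where "p = (\<chi> i. if i = 2 \<or> i = 5 then sqrt 2 else 1)"
  have p: "p \<in> cayley_cone"
    by (simp add: cayley_cone_def Pcay_def p_def)
  define C where "C = augmented_potential w p"
  define K where "K = cbox (\<chi> i. w i / C) (\<chi> i. 1 + 2 * C / w i) \<inter> {r. Pcay r = 0}"
  have sublevel: "r \<in> K" if "r \<in> cayley_cone" "augmented_potential w r \<le> C" for r
    using augmented_potential_sublevel_bounded[OF w that] that(1)
    by (simp add: K_def cayley_cone_def)
  have "p \<in> K"
    using p by (intro sublevel) (simp_all add: C_def)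
  have "0 < C"
    unfolding C_def by (rule augmented_potential_pos[OF w p])
  have K_cone: "K \<subseteq> cayley_cone"
  proof
    fix r assume "r \<in> K"
    moreover have "0 < w i / C" for i
      using w \<open>0 < C\<close> by simp
    ultimately show "r \<in> cayley_cone"
      by (force simp: K_def mem_box_cart cayley_cone_def intro: less_le_trans)
  qed
  have "compact K"
    unfolding K_def by (rule compact_Int_closed[OF compact_cbox closed_Pcay_zero])
  then obtain z where "z \<in> K" and z_min: "\<forall>r\<in>K. augmented_potential w z \<le> augmented_potential w r"
    using continuous_attains_inf[of K] continuous_on_subset[OF continuous_on_augmented_potential K_cone]
      \<open>p \<in> K\<close> by blast
  have "augmented_potential w z \<le> augmented_potential w r" if "r \<in> cayley_cone" for r
  proof (cases "augmented_potential w r \<le> C")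
    case True
    then show ?thesis
      using z_min sublevel that by blast
  next
    case False
    moreover have "augmented_potential w z \<le> C"
      using z_min \<open>p \<in> K\<close> unfolding C_def by blast
    ultimately show ?thesis
      by linarith
  qed
  then show ?thesis
    using \<open>z \<in> K\<close> K_cone by blast
qed

lemma lagrange_critical_of_min:
  assumes w: "\<forall>i. 0 < w i" and z: "z \<in> cayley_cone"
    and min: "\<forall>r\<in>cayley_cone. augmented_potential w z \<le> augmented_potential w r"
  shows "lagrange_critical w z"
proof -
  have zpos: "\<forall>i. 0 < z$i"
    using z by (simp add: cayley_cone_def)
  then have "\<forall>i. z$i \<noteq> 0"
    by (metis less_irrefl)
  define g where "g = potential_grad w z + (1 / 2) *\<^sub>R moment_grad w z"
  have "(augmented_potential w has_derivative (\<lambda>h. g \<bullet> h)) (at (cayley_lift z))"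
    unfolding cayley_lift_cone[OF z] g_def
    by (rule has_derivative_augmented_potential[OF \<open>\<forall>i. z$i \<noteq> 0\<close>])
  with has_derivative_cayley_lift[OF z]
  have "((\<lambda>x. augmented_potential w (cayley_lift x)) has_derivative
      (\<lambda>h. g \<bullet> (h + ((cayley_grad z \<bullet> h) / z$2) *\<^sub>R axis 5 1))) (at z)"
    by (rule has_derivative_compose)
  moreover have "\<forall>\<^sub>F x in at z.
      augmented_potential w (cayley_lift z) \<le> augmented_potential w (cayley_lift x)"
    using eventually_at_positive[OF zpos]
    by eventually_elim (use min cayley_lift_in_cone cayley_lift_cone[OF z] in auto)
  ultimately have "(\<lambda>h. g \<bullet> (h + ((cayley_grad z \<bullet> h) / z$2) *\<^sub>R axis 5 1)) = (\<lambda>h. 0)"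
    by (rule has_derivative_local_min)
  then have "(g + (g$5 / z$2) *\<^sub>R cayley_grad z) \<bullet> h = 0" for h
    by (drule_tac fun_cong[of _ _ h]) (simp add: inner_add_right inner_add_left inner_axis ac_simps)
  then have "g + (g$5 / z$2) *\<^sub>R cayley_grad z = 0"
    using inner_eq_zero_iff by blast
  then have "g = - ((g$5 / z$2) *\<^sub>R cayley_grad z)"
    by (simp add: eq_neg_iff_add_eq_0)
  moreover have "potential_grad w z = g - (1 / 2) *\<^sub>R moment_grad w z"
    by (simp add: g_def)
  ultimately have "potential_grad w z
      = (- 1 / 2) *\<^sub>R moment_grad w z + (- g$5 / z$2) *\<^sub>R cayley_grad z"
    by (simp add: algebra_simps)
  then show ?thesis
    unfolding lagrange_critical_def by blast
qed

lemma ex_lagrange_critical_moment: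
  assumes w: "\<forall>i. 0 < w i" and "0 < c"
  shows "\<exists>r\<in>cayley_cone. moment w r = c \<and> lagrange_critical w r"
proof -
  obtain z where z: "z \<in> cayley_cone"
    and min: "\<forall>r\<in>cayley_cone. augmented_potential w z \<le> augmented_potential w r"
    using ex_min_augmented_potential[OF w] by blast
  have zpos: "\<forall>i. 0 < z$i"
    using z by (simp add: cayley_cone_def)
  then have "\<forall>i. z$i \<noteq> 0"
    by (metis less_irrefl)
  have "0 < w i * (z$i)^2" for i
    using w[rule_format, of i] zpos[rule_format, of i] by simp
  then have "0 < moment w z"
    by (simp add: moment_def sum_pos)
  define k where "k = sqrt (c / moment w z)"
  have "0 < k"
    using \<open>0 < c\<close> \<open>0 < moment w z\<close> by (simp add: k_def)
  have "k *\<^sub>R z \<in> cayley_cone"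
    using z \<open>0 < k\<close> by (simp add: cayley_cone_def Pcay_scaleR)
  moreover have "moment w (k *\<^sub>R z) = c"
    using \<open>0 < c\<close> \<open>0 < moment w z\<close> by (simp add: moment_scaleR k_def)
  moreover have "lagrange_critical w (k *\<^sub>R z)"
    using lagrange_critical_scaleR[OF \<open>0 < k\<close> \<open>\<forall>i. z$i \<noteq> 0\<close>]
      lagrange_critical_of_min[OF w z min] by blast
  ultimately show ?thesis
    by blast
qed

section \<open>Critical points of \<open>U\<close> on \<open>M\<^sup>+\<close>\<close>

lemma ex_derivative_combination_iff:
  fixes f g p :: "'a::real_inner \<Rightarrow> real"
  assumes "(f has_derivative (\<lambda>h. F \<bullet> h)) (at x)" "(g has_derivative (\<lambda>h. G \<bullet> h)) (at x)"
    "(p has_derivative (\<lambda>h. Q \<bullet> h)) (at x)"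
  shows "(\<exists>Df Dg Dp a b. (f has_derivative Df) (at x) \<and> (g has_derivative Dg) (at x) \<and>
      (p has_derivative Dp) (at x) \<and> (\<forall>h. Df h = a * Dg h + b * Dp h)) \<longleftrightarrow>
    (\<exists>a b. F = a *\<^sub>R G + b *\<^sub>R Q)"
proof
  assume "\<exists>Df Dg Dp a b. (f has_derivative Df) (at x) \<and> (g has_derivative Dg) (at x) \<and>
      (p has_derivative Dp) (at x) \<and> (\<forall>h. Df h = a * Dg h + b * Dp h)"
  then obtain a b where "\<forall>h. F \<bullet> h = a * (G \<bullet> h) + b * (Q \<bullet> h)"
    using has_derivative_unique[OF _ assms(1)] has_derivative_unique[OF _ assms(2)]
      has_derivative_unique[OF _ assms(3)] by metis
  then have "\<forall>h. F \<bullet> h = (a *\<^sub>R G + b *\<^sub>R Q) \<bullet> h"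
    by (simp add: inner_add_left)
  then show "\<exists>a b. F = a *\<^sub>R G + b *\<^sub>R Q"
    unfolding vector_eq_rdot by blast
next
  assume "\<exists>a b. F = a *\<^sub>R G + b *\<^sub>R Q"
  then obtain a b where "F = a *\<^sub>R G + b *\<^sub>R Q"
    by blast
  then have "\<forall>h. F \<bullet> h = a * (G \<bullet> h) + b * (Q \<bullet> h)"
    by (simp add: inner_add_left)
  with assms show "\<exists>Df Dg Dp a b. (f has_derivative Df) (at x) \<and> (g has_derivative Dg) (at x) \<and>
      (p has_derivative Dp) (at x) \<and> (\<forall>h. Df h = a * Dg h + b * Dp h)"
    by blast
qed

definition pair_mass :: "real \<Rightarrow> real \<Rightarrow> real \<Rightarrow> real \<Rightarrow> 6 \<Rightarrow> real" where
  "pair_mass m1 m2 m3 m4 i =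
     (if i = 1 then m1 * m2 else if i = 2 then m1 * m3 else if i = 3 then m1 * m4
      else if i = 4 then m2 * m3 else if i = 5 then m2 * m4 else m3 * m4)"

lemma Upot_eq_potential: "Upot m1 m2 m3 m4 = potential (pair_mass m1 m2 m3 m4)"
  by (simp add: fun_eq_iff Upot_def potential_def sum_6 pair_mass_def)

lemma Imom_eq_moment:
  "Imom m1 m2 m3 m4 = (\<lambda>r. 1 / (2 * (m1 + m2 + m3 + m4)) * moment (pair_mass m1 m2 m3 m4) r)"
  by (simp add: fun_eq_iff Imom_def moment_def sum_6 pair_mass_def)

lemma Mplus_positive_iff:
  assumes "0 < m1" "0 < m2" "0 < m3" "0 < m4"
  shows "r \<in> Mplus m1 m2 m3 m4 \<and> (\<forall>i. 0 < r$i) \<longleftrightarrow>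
    r \<in> cayley_cone \<and> moment (pair_mass m1 m2 m3 m4) r = 2 * (m1 + m2 + m3 + m4)"
  using assms by (auto simp: Mplus_def cayley_cone_def Imom_eq_moment less_imp_le field_simps)

lemma has_derivative_Imom:
  "(Imom m1 m2 m3 m4 has_derivative
     (\<lambda>h. ((1 / (2 * (m1 + m2 + m3 + m4))) *\<^sub>R moment_grad (pair_mass m1 m2 m3 m4) r) \<bullet> h)) (at r)"
  unfolding Imom_eq_moment inner_scaleR_left by (intro has_derivative_mult_right has_derivative_moment)

lemma crit_point_iff_lagrange_critical:
  assumes "0 < m1" "0 < m2" "0 < m3" "0 < m4"
  shows "crit_point m1 m2 m3 m4 r \<longleftrightarrow>
    r \<in> cayley_cone \<and> moment (pair_mass m1 m2 m3 m4) r = 2 * (m1 + m2 + m3 + m4) \<and>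
    lagrange_critical (pair_mass m1 m2 m3 m4) r"
proof -
  define w where "w = pair_mass m1 m2 m3 m4"
  define c where "c = 1 / (2 * (m1 + m2 + m3 + m4))"
  have "0 < c"
    using assms by (simp add: c_def)
  have "crit_point m1 m2 m3 m4 r \<longleftrightarrow> r \<in> Mplus m1 m2 m3 m4 \<and> (\<forall>i. 0 < r$i) \<and>
      (\<exists>a b. potential_grad w r = a *\<^sub>R (c *\<^sub>R moment_grad w r) + b *\<^sub>R cayley_grad r)"
  proof (cases "\<forall>i. 0 < r$i")
    case True
    then have "\<forall>i. r$i \<noteq> 0"
      by (metis less_irrefl)
    from ex_derivative_combination_iff[OF has_derivative_potential[OF this]
        has_derivative_Imom has_derivative_Pcay]
    show ?thesis
      using True unfolding crit_point_def Upot_eq_potential c_def w_def by simp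
  qed (auto simp: crit_point_def)
  also have "\<dots> \<longleftrightarrow> r \<in> cayley_cone \<and> moment w r = 2 * (m1 + m2 + m3 + m4) \<and> lagrange_critical w r"
  proof -
    have "(\<exists>a b. potential_grad w r = a *\<^sub>R (c *\<^sub>R moment_grad w r) + b *\<^sub>R cayley_grad r)
        \<longleftrightarrow> lagrange_critical w r"
      unfolding lagrange_critical_def scaleR_scaleR
    proof
      assume "\<exists>a b. potential_grad w r = a *\<^sub>R moment_grad w r + b *\<^sub>R cayley_grad r"
      then obtain a b where "potential_grad w r = (a / c * c) *\<^sub>R moment_grad w r + b *\<^sub>R cayley_grad r"
        using \<open>0 < c\<close> by auto
      then show "\<exists>a b. potential_grad w r = (a * c) *\<^sub>R moment_grad w r + b *\<^sub>R cayley_grad r"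
        by blast
    qed blast
    then show ?thesis
      using Mplus_positive_iff[OF assms, folded w_def] by blast
  qed
  finally show ?thesis
    by (simp add: w_def)
qed

theorem lemma6:
  fixes m1 m2 m3 m4 :: real
  assumes "m1 > 0" "m2 > 0" "m3 > 0" "m4 > 0"
  shows "\<exists>!r. crit_point m1 m2 m3 m4 r"
proof -
  define w where "w = pair_mass m1 m2 m3 m4"
  have w: "\<forall>i. 0 < w i"
    using assms by (simp add: w_def pair_mass_def)
  note crit_iff = crit_point_iff_lagrange_critical[OF assms, folded w_def]
  have "0 < 2 * (m1 + m2 + m3 + m4)"
    using assms by simp
  then obtain r where r: "crit_point m1 m2 m3 m4 r"
    using ex_lagrange_critical_moment[OF w] crit_iff by blast
  have less: "potential w s < potential w s'"
    if "crit_point m1 m2 m3 m4 s" "crit_point m1 m2 m3 m4 s'" "s' \<noteq> s" for s s'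
    using lagrange_critical_strict_min[OF w] that crit_iff by metis
  show ?thesis
    using r less less_asym by (intro ex1I[of _ r]) blast+
qed

end
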